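(* Fix an integer $d\geq 2$ and $k\in\{2,\ldots,d\}$, and let $X\subseteq S^{d-1}\subseteq\mathbb{R}^d$ be a set of unit vectors with $|X|=d+k$ such that $\max\{\langle x,y\rangle:x,y\in X,\ x\neq y\}=0$. Then there exist a possibly empty subset $X_0\subseteq X$ and a partition $X_1\sqcup\cdots\sqcup X_l=X\setminus X_0$ with $l\geq k$ such that (i) $|X_0|=\dim\operatorname{span}X_0$, (ii) $|X_i|=\dim\operatorname{span}X_i+1$ for each $i\in\{1,\ldots,l\}$, and (iii) $\operatorname{span}X_i\perp\operatorname{span}X_j$ whenever $i\neq j$ (with $i,j\in\{0,1,\ldots,l\}$).
   Context: For any $X\subseteq S^{d-1}$ with $|X|\geq d+2$ one always has $\max\{\langle x,y\rangle:x\neq y\}\geq 0$ (Rankin's orthoplex bound); the hypothesis says $X$ achieves equality in this bound. *)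

theory Defs
  imports "HOL-Analysis.Analysis"
begin

end

theory Submission
  imports Defs
begin

text \<open>
  For such a set, the positive and the negative part of a linear relation are equal vectors
  with inner product \<open>\<le> 0\<close>, so both vanish; pairing the positive part with a point outside
  its support then shows that this support is orthogonal to all other points. Hence every
  dependent set splits off an orthogonal dependent part, and one of least cardinality is
  minimally dependent, so its cardinality is its dimension plus one. Removing it and recursing
  decomposes the set into an independent rest and \<open>l\<close> mutually orthogonal such parts, with
  \<open>card = dim + l\<close>; since \<open>dim X \<le> d\<close> and \<open>card X = d + k\<close>, this forces \<open>l \<ge> k\<close>.
\<close>

definition orthogonal_dependent_part :: "'a::real_inner set \<Rightarrow> 'a set \<Rightarrow> bool" where
  "orthogonal_dependent_part Y S \<longleftrightarrow>
     S \<subseteq> Y \<and> dependent S \<and> (\<forall>a\<in>S. \<forall>y\<in>Y - S. orthogonal a y)"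

definition orthogonal_decomposition :: "'a::euclidean_space set \<Rightarrow> (nat \<Rightarrow> 'a set) \<Rightarrow> nat \<Rightarrow> bool" where
  "orthogonal_decomposition Y P l \<longleftrightarrow>
     P 0 \<subseteq> Y \<and> independent (P 0) \<and>
     (\<forall>i\<in>{1..l}. P i \<noteq> {} \<and> card (P i) = dim (P i) + 1) \<and>
     disjoint_family_on P {1..l} \<and> (\<Union>i\<in>{1..l}. P i) = Y - P 0 \<and>
     pairwise (\<lambda>i j. \<forall>u\<in>P i. \<forall>v\<in>P j. orthogonal u v) {0..l}"

lemma pairwise_inner_le_Max:
  fixes X :: "'a::real_inner set"
  assumes "finite X"
  shows "pairwise (\<lambda>x y. x \<bullet> y \<le> Max {x \<bullet> y | x y. x \<in> X \<and> y \<in> X \<and> x \<noteq> y}) X"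
proof -
  have "finite {x \<bullet> y | x y. x \<in> X \<and> y \<in> X}"
    using assms by (intro finite_image_set2) simp_all
  then have "finite {x \<bullet> y | x y. x \<in> X \<and> y \<in> X \<and> x \<noteq> y}"
    by (rule rev_finite_subset) blast
  then show ?thesis
    by (intro pairwiseI Max_ge) blast+
qed

lemma orthogonal_spans:
  assumes "\<forall>a\<in>A. \<forall>b\<in>B. orthogonal a b" "u \<in> span A" "v \<in> span B"
  shows "orthogonal u v"
proof -
  have "orthogonal v a" if "a \<in> A" for a
    using assms(1,3) that by (metis orthogonal_commute orthogonal_to_span)
  then show ?thesis
    using assms(2) by (metis orthogonal_commute orthogonal_to_span)
qed

lemma positive_part_of_relation_vanishes:
  fixes T :: "'a::real_inner set"
  assumes nonpos: "pairwise (\<lambda>x y. x \<bullet> y \<le> 0) T" and "finite T"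
    and relation: "(\<Sum>v\<in>T. c v *\<^sub>R v) = 0"
  shows "(\<Sum>v\<in>{v\<in>T. c v > 0}. c v *\<^sub>R v) = 0"
proof -
  define A where "A = {v\<in>T. c v > 0}"
  define w where "w = (\<Sum>a\<in>A. c a *\<^sub>R a)"
  have "(\<Sum>v\<in>T. c v *\<^sub>R v) = (\<Sum>b\<in>T - A. c b *\<^sub>R b) + w"
    unfolding w_def using \<open>finite T\<close> by (intro sum.subset_diff) (auto simp: A_def)
  then have w_negative_part: "w = (\<Sum>b\<in>T - A. (- c b) *\<^sub>R b)"
    using relation by (simp add: sum_negf add_eq_0_iff)
  have "w \<bullet> w = (\<Sum>a\<in>A. \<Sum>b\<in>T - A. (c a * - c b) * (a \<bullet> b))"
    by (subst (2) w_negative_part, unfold w_def inner_sum_left)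
      (simp add: inner_sum_right sum_distrib_left mult_ac)
  also have "\<dots> \<le> 0"
  proof (intro sum_nonpos)
    fix a b assume "a \<in> A" "b \<in> T - A"
    then have "c a * - c b \<ge> 0" and "a \<bullet> b \<le> 0"
      using nonpos by (auto simp: A_def pairwise_def mult_nonneg_nonpos)
    then show "c a * - c b * (a \<bullet> b) \<le> 0"
      by (rule mult_nonneg_nonpos)
  qed
  finally have "w = 0"
    by (metis inner_eq_zero_iff inner_ge_zero order_antisym)
  then show ?thesis
    by (simp add: w_def A_def)
qed

lemma positive_relation_orthogonal:
  fixes Y :: "'a::real_inner set"
  assumes nonpos: "pairwise (\<lambda>x y. x \<bullet> y \<le> 0) Y" and "finite A" "A \<subseteq> Y"
    and positive: "\<forall>a\<in>A. c a > 0" and relation: "(\<Sum>a\<in>A. c a *\<^sub>R a) = 0"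
    and "a \<in> A" "y \<in> Y - A"
  shows "orthogonal a y"
proof -
  have terms_nonpos: "- (c x * (x \<bullet> y)) \<ge> 0" if "x \<in> A" for x
  proof -
    have "x \<bullet> y \<le> 0"
      using pairwiseD(1)[OF nonpos] that \<open>A \<subseteq> Y\<close> \<open>y \<in> Y - A\<close> by blast
    moreover have "c x > 0"
      using positive that by blast
    ultimately show ?thesis
      by (simp add: mult_nonneg_nonpos)
  qed
  have "(\<Sum>x\<in>A. - (c x * (x \<bullet> y))) = - ((\<Sum>x\<in>A. c x *\<^sub>R x) \<bullet> y)"
    by (simp add: inner_sum_left sum_negf)
  then have "(\<Sum>x\<in>A. - (c x * (x \<bullet> y))) = 0"
    using relation by simp
  then have "c a * (a \<bullet> y) = 0"
    using sum_nonneg_eq_0_iff[OF \<open>finite A\<close>, of "\<lambda>x. - (c x * (x \<bullet> y))"]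
      terms_nonpos \<open>a \<in> A\<close> by simp
  moreover have "c a > 0"
    using positive \<open>a \<in> A\<close> by blast
  ultimately show ?thesis
    by (simp add: orthogonal_def)
qed

lemma dependent_subset_has_orthogonal_dependent_part:
  fixes Y :: "'a::real_inner set"
  assumes nonpos: "pairwise (\<lambda>x y. x \<bullet> y \<le> 0) Y" and "T \<subseteq> Y" "dependent T"
  shows "\<exists>A\<subseteq>T. orthogonal_dependent_part Y A"
proof -
  obtain t u v where t: "finite t" "t \<subseteq> T" and u: "(\<Sum>v\<in>t. u v *\<^sub>R v) = 0"
    and v: "v \<in> t" "u v \<noteq> 0"
    using \<open>dependent T\<close> unfolding dependent_explicit by blast
  define c where "c = (if u v > 0 then u else - u)"
  have c_relation: "(\<Sum>v\<in>t. c v *\<^sub>R v) = 0" and "c v > 0"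
    using u v by (auto simp: c_def sum_negf)
  define A where "A = {v\<in>t. c v > 0}"
  have "finite A" "A \<subseteq> Y" "v \<in> A"
    using t \<open>T \<subseteq> Y\<close> v \<open>c v > 0\<close> by (auto simp: A_def)
  have relation: "(\<Sum>a\<in>A. c a *\<^sub>R a) = 0"
    unfolding A_def using nonpos t \<open>T \<subseteq> Y\<close> c_relation
    by (intro positive_part_of_relation_vanishes) (auto intro: pairwise_subset)
  have "dependent A"
    unfolding dependent_explicit using \<open>finite A\<close> relation \<open>v \<in> A\<close> \<open>c v > 0\<close> by force
  moreover have "\<forall>a\<in>A. \<forall>y\<in>Y - A. orthogonal a y"
    using positive_relation_orthogonal[OF nonpos \<open>finite A\<close> \<open>A \<subseteq> Y\<close> _ relation]
    by (auto simp: A_def)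
  ultimately show ?thesis
    using t \<open>T \<subseteq> Y\<close> by (auto simp: orthogonal_dependent_part_def A_def intro!: exI[of _ A])
qed

lemma orthogonal_dependent_part_trans:
  assumes "orthogonal_dependent_part Y S" "orthogonal_dependent_part S A"
  shows "orthogonal_dependent_part Y A"
  using assms unfolding orthogonal_dependent_part_def by blast

lemma card_minimal_orthogonal_dependent_part:
  fixes S :: "'a::euclidean_space set"
  assumes nonpos: "pairwise (\<lambda>x y. x \<bullet> y \<le> 0) S" and "finite S" "dependent S"
    and minimal: "\<And>A. orthogonal_dependent_part S A \<Longrightarrow> card S \<le> card A"
  shows "card S = dim S + 1"
proof -
  obtain x where "x \<in> S"
    using \<open>dependent S\<close> by (metis all_not_in_conv independent_empty)
  have "independent (S - {x})"
  proof
    assume "dependent (S - {x})"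
    then obtain A where "A \<subseteq> S - {x}" "orthogonal_dependent_part S A"
      using dependent_subset_has_orthogonal_dependent_part[OF nonpos] by blast
    then have "card S \<le> card (S - {x})"
      using minimal[of A] card_mono[of "S - {x}" A] \<open>finite S\<close> by simp
    then show False
      using card_Diff1_less[OF \<open>finite S\<close> \<open>x \<in> S\<close>] by linarith
  qed
  moreover have "x \<in> span (S - {x})"
    using \<open>dependent S\<close> \<open>x \<in> S\<close> calculation independent_insertI[of x "S - {x}"]
    by (auto simp: insert_absorb)
  ultimately have "dim S = card (S - {x})"
    using dim_insert[of x "S - {x}"] \<open>x \<in> S\<close> by (simp add: insert_absorb dim_eq_card_independent)
  moreover have "card S = Suc (card (S - {x}))"
    using \<open>finite S\<close> \<open>x \<in> S\<close> by (rule card.remove)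
  ultimately show ?thesis
    by simp
qed

lemma obtain_orthogonal_dependent_part_card_dim:
  fixes Y :: "'a::euclidean_space set"
  assumes "finite Y" "pairwise (\<lambda>x y. x \<bullet> y \<le> 0) Y" "dependent Y"
  obtains S where "orthogonal_dependent_part Y S" "card S = dim S + 1"
proof -
  have "orthogonal_dependent_part Y Y"
    using \<open>dependent Y\<close> by (simp add: orthogonal_dependent_part_def)
  then obtain S where S: "orthogonal_dependent_part Y S"
    and least: "\<And>A. orthogonal_dependent_part Y A \<Longrightarrow> card S \<le> card A"
    using ex_has_least_nat[of "orthogonal_dependent_part Y" Y card] by blast
  have "S \<subseteq> Y" "dependent S"
    using S by (auto simp: orthogonal_dependent_part_def)
  have "pairwise (\<lambda>x y. x \<bullet> y \<le> 0) S"
    using assms(2) \<open>S \<subseteq> Y\<close> by (rule pairwise_subset)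
  moreover have "finite S"
    using \<open>S \<subseteq> Y\<close> assms(1) by (rule finite_subset)
  moreover have "card S \<le> card A" if "orthogonal_dependent_part S A" for A
    using least orthogonal_dependent_part_trans[OF S that] by blast
  ultimately have "card S = dim S + 1"
    using \<open>dependent S\<close> by (intro card_minimal_orthogonal_dependent_part)
  with S show ?thesis
    using that by blast
qed

lemma orthogonal_decomposition_extend:
  assumes dec: "orthogonal_decomposition R P l"
    and "S \<noteq> {}" "S \<inter> R = {}" "card S = dim S + 1"
    and orth: "\<forall>a\<in>S. \<forall>b\<in>R. orthogonal a b"
  shows "orthogonal_decomposition (S \<union> R) (P(Suc l := S)) (Suc l)"
proof -
  let ?P = "P(Suc l := S)"
  have P_in_R: "P i \<subseteq> R" if "i \<in> {0..l}" for i
    using dec that unfolding orthogonal_decomposition_def by (cases "i = 0") auto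
  have insert_1: "{1..Suc l} = insert (Suc l) {1..l}"
    and insert_0: "{0..Suc l} = insert (Suc l) {0..l}" by auto
  have S_orth: "orthogonal u v" "orthogonal v u" if "i \<in> {0..l}" "u \<in> S" "v \<in> P i" for i u v
    using orth P_in_R that orthogonal_commute by blast+
  have "(\<Union>i\<in>{1..Suc l}. ?P i) = S \<union> (\<Union>i\<in>{1..l}. P i)"
    unfolding insert_1 by auto
  also have "\<dots> = (S \<union> R) - ?P 0"
    using dec P_in_R[of 0] \<open>S \<inter> R = {}\<close> unfolding orthogonal_decomposition_def by auto
  finally have union: "(\<Union>i\<in>{1..Suc l}. ?P i) = (S \<union> R) - ?P 0" .
  have "disjoint_family_on ?P {1..Suc l}"
    using dec P_in_R \<open>S \<inter> R = {}\<close> unfolding insert_1 orthogonal_decomposition_def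
    by (auto simp: disjoint_family_on_insert disjoint_family_on_def)
  moreover have "pairwise (\<lambda>i j. \<forall>u\<in>?P i. \<forall>v\<in>?P j. orthogonal u v) {0..Suc l}"
    using dec S_orth unfolding insert_0 orthogonal_decomposition_def
    by (auto simp: pairwise_insert pairwise_def)
  moreover have "\<forall>i\<in>{1..Suc l}. ?P i \<noteq> {} \<and> card (?P i) = dim (?P i) + 1"
    using dec \<open>S \<noteq> {}\<close> \<open>card S = dim S + 1\<close>
    unfolding insert_1 orthogonal_decomposition_def by auto
  ultimately show ?thesis
    using dec union unfolding orthogonal_decomposition_def by auto
qed

lemma nonpos_set_has_orthogonal_decomposition:
  fixes Y :: "'a::euclidean_space set"
  assumes "finite Y" "pairwise (\<lambda>x y. x \<bullet> y \<le> 0) Y"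
  shows "\<exists>P l. orthogonal_decomposition Y P l \<and> card Y = dim Y + l"
  using assms
proof (induction "card Y" arbitrary: Y rule: less_induct)
  case less
  show ?case
  proof (cases "independent Y")
    case True
    then have "orthogonal_decomposition Y (\<lambda>i. if i = 0 then Y else {}) 0"
      by (simp add: orthogonal_decomposition_def disjoint_family_on_def)
    with True show ?thesis
      by (metis add_0_right dim_eq_card_independent)
  next
    case False
    then obtain S where "orthogonal_dependent_part Y S" and "card S = dim S + 1"
      using obtain_orthogonal_dependent_part_card_dim less.prems by blast
    then have "S \<subseteq> Y" "S \<noteq> {}" and orth: "\<forall>a\<in>S. \<forall>b\<in>Y - S. orthogonal a b"
      by (auto simp: orthogonal_dependent_part_def)
    define R where "R = Y - S"
    have "card R < card Y"
      unfolding R_def using \<open>S \<subseteq> Y\<close> \<open>S \<noteq> {}\<close> less.prems(1) by (intro psubset_card_mono) auto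
    moreover have "finite R" "pairwise (\<lambda>x y. x \<bullet> y \<le> 0) R"
      unfolding R_def using less.prems by (auto intro: pairwise_subset)
    ultimately obtain P l where dec: "orthogonal_decomposition R P l" and "card R = dim R + l"
      using less.hyps by blast
    have Y_split: "Y = S \<union> R"
      using \<open>S \<subseteq> Y\<close> by (auto simp: R_def)
    have "card Y = card S + card R"
      unfolding Y_split using less.prems(1) \<open>S \<subseteq> Y\<close>
      by (intro card_Un_disjoint) (auto simp: R_def intro: finite_subset)
    moreover have "dim Y = dim S + dim R"
      unfolding Y_split using orth
      by (intro dim_orthogonal_sum) (auto simp: R_def orthogonal_def)
    moreover have "orthogonal_decomposition Y (P(Suc l := S)) (Suc l)"
      unfolding Y_split using dec \<open>S \<noteq> {}\<close> \<open>card S = dim S + 1\<close> orth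
      by (intro orthogonal_decomposition_extend) (auto simp: R_def)
    ultimately show ?thesis
      using \<open>card S = dim S + 1\<close> \<open>card R = dim R + l\<close>
      by (intro exI[where x = "P(Suc l := S)"] exI[where x = "Suc l"]) simp
  qed
qed

lemma orthogonal_decomposition_spans_orthogonal:
  assumes "orthogonal_decomposition Y P l" "i \<in> {0..l}" "j \<in> {0..l}" "i \<noteq> j"
    and "u \<in> span (P i)" "v \<in> span (P j)"
  shows "u \<bullet> v = 0"
proof -
  have "\<forall>a\<in>P i. \<forall>b\<in>P j. orthogonal a b"
    using assms(1-4) unfolding orthogonal_decomposition_def pairwise_def by blast
  then have "orthogonal u v"
    using assms(5,6) by (rule orthogonal_spans)
  then show ?thesis
    by (simp add: orthogonal_def)
qed

theorem theorem2p2: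
  fixes X :: "(real ^ 'n) set" and k :: nat
  assumes "CARD('n) \<ge> 2"
    and "2 \<le> k" and "k \<le> CARD('n)"
    and "finite X" and "card X = CARD('n) + k"
    and "\<forall>x\<in>X. norm x = 1"
    and "Max {x \<bullet> y | x y. x \<in> X \<and> y \<in> X \<and> x \<noteq> y} = 0"
  shows "\<exists>(P :: nat \<Rightarrow> (real ^ 'n) set) l.
           l \<ge> k \<and>
           P 0 \<subseteq> X \<and>
           (\<forall>i\<in>{1..l}. P i \<noteq> {}) \<and>
           (\<forall>i\<in>{1..l}. \<forall>j\<in>{1..l}. i \<noteq> j \<longrightarrow> P i \<inter> P j = {}) \<and>
           (\<Union>i\<in>{1..l}. P i) = X - P 0 \<and>
           card (P 0) = dim (span (P 0)) \<and>
           (\<forall>i\<in>{1..l}. card (P i) = dim (span (P i)) + 1) \<and>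
           (\<forall>i\<in>{0..l}. \<forall>j\<in>{0..l}. i \<noteq> j \<longrightarrow>
              (\<forall>u\<in>span (P i). \<forall>v\<in>span (P j). u \<bullet> v = 0))"
proof -
  have "pairwise (\<lambda>x y. x \<bullet> y \<le> 0) X"
    using pairwise_inner_le_Max[OF \<open>finite X\<close>] assms(7) by simp
  then obtain P l where dec: "orthogonal_decomposition X P l" and "card X = dim X + l"
    using nonpos_set_has_orthogonal_decomposition[OF \<open>finite X\<close>] by blast
  moreover have "dim X \<le> CARD('n)"
    by (rule dim_subset_UNIV_cart)
  ultimately have "l \<ge> k"
    using assms(5) by linarith
  have "independent (P 0)"
    using dec by (simp add: orthogonal_decomposition_def)
  then have "card (P 0) = dim (span (P 0))"
    by (simp add: dim_eq_card_independent)
  then show ?thesis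
    using dec \<open>l \<ge> k\<close> orthogonal_decomposition_spans_orthogonal[OF dec]
    unfolding orthogonal_decomposition_def disjoint_family_on_def
    by (intro exI[where x = P] exI[where x = l]) auto
qed

end
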